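(* Assume that every $P_x$ and $Q_y$ is the distribution of a vector of i.i.d. centered (mean-zero) standard type I extreme value (Gumbel) random variables. Then the generalized entropy of matching is $$\mathcal E(\mu,\bm r)=-\sum_{x\in\mathcal X,y\in\mathcal Y_0}\mu_{xy}\log\mu_{y|x}-\sum_{y\in\mathcal Y,x\in\mathcal X_0}\mu_{xy}\log\mu_{x|y},$$ where $\mu_{y|x}=\mu_{xy}/n_x$, $\mu_{x|y}=\mu_{xy}/m_y$. Moreover, define for $\bm u\in\mathbb R^{\mathcal X},\bm v\in\mathbb R^{\mathcal Y}$ $$F(\bm u,\bm v;\Phi,\bm r)=\sum_{x\in\mathcal X}n_x(u_x+e^{-u_x}-1)+\sum_{y\in\mathcal Y}m_y(v_y+e^{-v_y}-1)+2\sum_{x\in\mathcal X,y\in\mathcal Y}\sqrt{n_xm_y}\,e^{(\Phi_{xy}-u_x-v_y)/2}.$$ Then $F$ is strictly convex in $(\bm u,\bm v)$, its minimum value equals the social welfare $\mathcal W(\Phi,\bm r)$, and at the minimizer the equilibrium matching patterns are $\mu_{x0}=n_xe^{-u_x}$, $\mu_{0y}=m_ye^{-v_y}$, $\mu_{xy}=\sqrt{n_xm_y}\exp((\Phi_{xy}-u_x-v_y)/2)$; in particular $\mu_{xy}=\sqrt{\mu_{x0}\mu_{0y}}\exp(\Phi_{xy}/2)$, and the minimizers $u_x=-\log(\mu_{x0}/n_x)$, $v_y=-\log(\mu_{0y}/m_y)$ are the average equilibrium utilities of men of group $x$ and women of group $y$.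
   Context: Setting. $\mathcal X,\mathcal Y$ finite sets of groups of men and women, $\mathcal X_0=\mathcal X\cup\{0\}$, $\mathcal Y_0=\mathcal Y\cup\{0\}$ ($0$ = singlehood), continuum populations with masses $n_x>0$, $m_y>0$, $\bm r=(\bm n,\bm m)$. Each man of group $x$ has a vector $\varepsilon\in\mathbb R^{\mathcal Y_0}$ distributed as $P_x$, each woman of group $y$ a vector $\eta\in\mathbb R^{\mathcal X_0}$ distributed as $Q_y$. Separability with transferable utility: for a surplus matrix $\Phi=(\Phi_{xy})$, the joint surplus of a match between man $i$ (group $x$) and woman $j$ (group $y$) is $\Phi_{xy}+\varepsilon_{iy}+\eta_{xj}$, and singles get $\varepsilon_{i0}$, $\eta_{0j}$. A group-level matching $\mu=(\mu_{xy})$ records masses of couples, with $\mu_{x0}=n_x-\sum_y\mu_{xy}$, $\mu_{0y}=m_y-\sum_x\mu_{xy}$. $G(\bm U,\bm n)=\sum_x n_x\mathbb E_{P_x}\max_{y\in\mathcal Y_0}(U_{xy}+\varepsilon_y)$ (with $U_{x0}=0$), $H(\bm V,\bm m)=\sum_ym_y\mathbb E_{Q_y}\max_{x\in\mathcal X_0}(V_{xy}+\eta_x)$ (with $V_{0y}=0$), $G^*,H^*$ their Legendre–Fenchel transforms in $\bm U,\bm V$, and the generalized entropy is $\mathcal E(\mu,\bm r)=-G^*(\mu,\bm n)-H^*(\mu,\bm m)$. The social welfare $\mathcal W(\Phi,\bm r)$ is the total utility of all agents at a stable outcome, equal to $\max_{\mu}\left(\sum_{x,y}\mu_{xy}\Phi_{xy}+\mathcal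 E(\mu,\bm r)\right)$, and the equilibrium matching patterns are the maximizer. *)

theory Defs
  imports "HOL-Analysis.Analysis"
begin

text \<open>Groups of men: finite type 'x; groups of women: finite type 'y.
  Singlehood 0 is represented by None, so X0 = 'x option, Y0 = 'y option.\<close>

definition mu_x0 :: "('x::finite \<Rightarrow> 'y::finite \<Rightarrow> real) \<Rightarrow> ('x \<Rightarrow> real) \<Rightarrow> 'x \<Rightarrow> real" where
  "mu_x0 mu n x = n x - (\<Sum>y\<in>UNIV. mu x y)"

definition mu_0y :: "('x::finite \<Rightarrow> 'y::finite \<Rightarrow> real) \<Rightarrow> ('y \<Rightarrow> real) \<Rightarrow> 'y \<Rightarrow> real" where
  "mu_0y mu m y = m y - (\<Sum>x\<in>UNIV. mu x y)"

text \<open>Centered standard type I extreme value (Gumbel) distribution on the reals: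
  CDF exp(-exp(-(t+gamma))), gamma the Euler-Mascheroni constant (so the mean is 0).\<close>

definition gumbel_density :: "real \<Rightarrow> real" where
  "gumbel_density t = exp (-(t + euler_mascheroni)) * exp (- exp (-(t + euler_mascheroni)))"

definition centered_gumbel :: "real measure" where
  "centered_gumbel = density lborel (\<lambda>t. ennreal (gumbel_density t))"

definition iid_gumbel :: "('i::finite \<Rightarrow> real) measure" where
  "iid_gumbel = PiM UNIV (\<lambda>_. centered_gumbel)"

definition Uext :: "('x \<Rightarrow> 'y \<Rightarrow> real) \<Rightarrow> 'x \<Rightarrow> 'y option \<Rightarrow> real" where
  "Uext U x z = (case z of None \<Rightarrow> 0 | Some y \<Rightarrow> U x y)"

definition Vext :: "('x \<Rightarrow> 'y \<Rightarrow> real) \<Rightarrow> 'y \<Rightarrow> 'x option \<Rightarrow> real" where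
  "Vext V y z = (case z of None \<Rightarrow> 0 | Some x \<Rightarrow> V x y)"

definition avg_util_men :: "('x \<Rightarrow> ('y::finite option \<Rightarrow> real) measure) \<Rightarrow> ('x \<Rightarrow> 'y \<Rightarrow> real) \<Rightarrow> 'x \<Rightarrow> real" where
  "avg_util_men P U x = (\<integral>eps. Max (range (\<lambda>z. Uext U x z + eps z)) \<partial>(P x))"

definition avg_util_women :: "('y \<Rightarrow> ('x::finite option \<Rightarrow> real) measure) \<Rightarrow> ('x \<Rightarrow> 'y \<Rightarrow> real) \<Rightarrow> 'y \<Rightarrow> real" where
  "avg_util_women Q V y = (\<integral>eta. Max (range (\<lambda>z. Vext V y z + eta z)) \<partial>(Q y))"

definition G :: "('x::finite \<Rightarrow> ('y::finite option \<Rightarrow> real) measure) \<Rightarrow> ('x \<Rightarrow> 'y \<Rightarrow> real) \<Rightarrow> ('x \<Rightarrow> real) \<Rightarrow> real" where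
  "G P U n = (\<Sum>x\<in>UNIV. n x * avg_util_men P U x)"

definition H :: "('y::finite \<Rightarrow> ('x::finite option \<Rightarrow> real) measure) \<Rightarrow> ('x \<Rightarrow> 'y \<Rightarrow> real) \<Rightarrow> ('y \<Rightarrow> real) \<Rightarrow> real" where
  "H Q V m = (\<Sum>y\<in>UNIV. m y * avg_util_women Q V y)"

definition Gstar :: "('x::finite \<Rightarrow> ('y::finite option \<Rightarrow> real) measure) \<Rightarrow> ('x \<Rightarrow> 'y \<Rightarrow> real) \<Rightarrow> ('x \<Rightarrow> real) \<Rightarrow> ereal" where
  "Gstar P mu n = (SUP U. ereal ((\<Sum>x\<in>UNIV. \<Sum>y\<in>UNIV. mu x y * U x y) - G P U n))"

definition Hstar :: "('y::finite \<Rightarrow> ('x::finite option \<Rightarrow> real) measure) \<Rightarrow> ('x \<Rightarrow> 'y \<Rightarrow> real) \<Rightarrow> ('y \<Rightarrow> real) \<Rightarrow> ereal" where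
  "Hstar Q mu m = (SUP V. ereal ((\<Sum>x\<in>UNIV. \<Sum>y\<in>UNIV. mu x y * V x y) - H Q V m))"

definition gen_entropy where
  "gen_entropy P Q mu n m = - Gstar P mu n - Hstar Q mu m"

definition welfare_obj where
  "welfare_obj P Q Phi mu n m = ereal (\<Sum>x\<in>UNIV. \<Sum>y\<in>UNIV. mu x y * Phi x y) + gen_entropy P Q mu n m"

definition social_welfare where
  "social_welfare P Q Phi n m = (SUP mu. welfare_obj P Q Phi mu n m)"

definition is_equilibrium_matching where
  "is_equilibrium_matching P Q Phi n m mu \<longleftrightarrow> welfare_obj P Q Phi mu n m = social_welfare P Q Phi n m"

definition feasible_matching :: "('x::finite \<Rightarrow> 'y::finite \<Rightarrow> real) \<Rightarrow> ('x \<Rightarrow> real) \<Rightarrow> ('y \<Rightarrow> real) \<Rightarrow> bool" where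
  "feasible_matching mu n m \<longleftrightarrow> (\<forall>x y. 0 \<le> mu x y) \<and> (\<forall>x. 0 \<le> mu_x0 mu n x) \<and> (\<forall>y. 0 \<le> mu_0y mu m y)"

definition Ffun :: "('x::finite \<Rightarrow> 'y::finite \<Rightarrow> real) \<Rightarrow> ('x \<Rightarrow> real) \<Rightarrow> ('y \<Rightarrow> real) \<Rightarrow> ('x \<Rightarrow> real) \<Rightarrow> ('y \<Rightarrow> real) \<Rightarrow> real" where
  "Ffun Phi n m u v =
     (\<Sum>x\<in>UNIV. n x * (u x + exp (- u x) - 1))
   + (\<Sum>y\<in>UNIV. m y * (v y + exp (- v y) - 1))
   + 2 * (\<Sum>x\<in>UNIV. \<Sum>y\<in>UNIV. sqrt (n x * m y) * exp ((Phi x y - u x - v y) / 2))"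

end

theory Submission
  imports Defs "HOL-Probability.Probability" "HOL-Real_Asymp.Real_Asymp"
begin

text \<open>Max-stability of the Gumbel law makes the surplus function \<open>G\<close> a weighted sum of
  log-sum-exp functions \<open>n x * ln (1 + (\<Sum>y. exp (U x y)))\<close>, whose convex conjugate is the
  entropy \<open>\<Sum> mu ln (mu / n)\<close> (including the singles); this gives the entropy formula.

  A minimizer \<open>(u, v)\<close> of the strictly convex, coercive function \<open>F\<close> exists, and its
  first-order conditions say that the matching \<open>mu x y = sqrt (n x * m y) * exp ((Phi x y - u x - v y) / 2)\<close>
  leaves \<open>n x * exp (- u x)\<close> men and \<open>m y * exp (- v y)\<close> women single. Then
  \<open>U x y = ln (mu x y / mu_x0 x)\<close> and \<open>Phi - U\<close> are dual certificates: the Fenchel--Young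
  inequalities for \<open>G\<close> and \<open>H\<close> are equalities, so the welfare of \<open>mu\<close> equals
  \<open>G U + H (Phi - U) = F (u, v)\<close>, which by weak duality bounds the welfare of every matching.
  Any other optimal matching also attains equality for \<open>G\<close> at \<open>U\<close>, which pins it down as the
  logit shares of \<open>U\<close>, i.e. as \<open>mu\<close>.\<close>

section \<open>The centered Gumbel distribution\<close>

lemma has_bochner_integral_Gamma:
  fixes x :: real
  assumes "0 < x"
  shows "has_bochner_integral lborel (\<lambda>t. indicator {0..} t * (t powr (x - 1) / exp t)) (Gamma x)"
proof (rule has_bochner_integral_nn_integral)
  have "integral\<^sup>N lborel (\<lambda>t. ennreal (t powr (x - 1) / exp t) * indicator {0..} t) = ennreal (Gamma x)"
    by (rule nn_integral_has_integral_lebesgue'[OF _ Gamma_integral_real[OF assms]]) simp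
  then show "(\<integral>\<^sup>+ t. ennreal (indicator {0..} t * (t powr (x - 1) / exp t)) \<partial>lborel) = ennreal (Gamma x)"
    by (subst (asm) nn_integral_cong[where v="\<lambda>t. ennreal (indicator {0..} t * (t powr (x - 1) / exp t))"])
       (auto split: split_indicator)
  show "0 \<le> Gamma x"
    using Gamma_real_pos[OF assms] by simp
qed auto

lemma difference_quotient_LIMSEQ:
  fixes f :: "real \<Rightarrow> real"
  assumes "(f has_field_derivative D) (at x)"
  shows "(\<lambda>k. (f (x + inverse (real (Suc k))) - f x) / inverse (real (Suc k))) \<longlonglongrightarrow> D"
proof -
  have "((\<lambda>y. (f y - f x) / (y - x)) \<longlongrightarrow> D) (at x)"
    using assms by (simp add: has_field_derivative_iff)
  moreover have "filterlim (\<lambda>k. x + inverse (real (Suc k))) (at x) sequentially"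
  proof (rule filterlim_atI)
    show "((\<lambda>k. x + inverse (real (Suc k))) \<longlongrightarrow> x) sequentially"
      using tendsto_add[OF tendsto_const LIMSEQ_inverse_real_of_nat, of x] by simp
  qed simp
  ultimately show ?thesis
    using filterlim_compose by fastforce
qed

lemma powr_difference_quotient_mono:
  fixes t a b :: real
  assumes "0 < t" and "0 < b" and "b \<le> a"
  shows "(t powr b - 1) / b \<le> (t powr a - 1) / a"
proof -
  define r where "r = b / a"
  have r: "0 < r" "r \<le> 1"
    using assms by (auto simp: r_def)
  have "exp ((1 - r) *\<^sub>R 0 + r *\<^sub>R (a * ln t)) \<le> (1 - r) * exp 0 + r * exp (a * ln t)"
    using r by (intro convex_onD[OF exp_convex]) auto
  then have "t powr b - 1 \<le> r * (t powr a - 1)"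
    using assms by (simp add: powr_def r_def algebra_simps)
  then show ?thesis
    using assms by (simp add: r_def field_simps)
qed

text \<open>The integral equals \<open>- Gamma'(1)\<close>; it is obtained by monotone convergence from the
  difference quotients \<open>(Gamma 1 - Gamma (1 + h)) / h\<close>.\<close>
lemma has_bochner_integral_neg_ln_exp:
  "has_bochner_integral lborel (\<lambda>t::real. indicator {0..} t * (- ln t / exp t)) euler_mascheroni"
proof -
  define h where "h k = inverse (real (Suc k))" for k
  have h_pos: "0 < h k" for k
    by (simp add: h_def)
  define f where "f k t = indicator {0..} t * ((t powr 0 - t powr h k) / h k / exp t)" for k t
  have f_integral: "has_bochner_integral lborel (f k) ((Gamma 1 - Gamma (1 + h k)) / h k)" for k
  proof -
    have "has_bochner_integral lborel (\<lambda>t. (indicator {0..} t * (t powr (1 - 1) / exp t)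
        - indicator {0..} t * (t powr ((1 + h k) - 1) / exp t)) / h k) ((Gamma 1 - Gamma (1 + h k)) / h k)"
      by (intro has_bochner_integral_divide_zero has_bochner_integral_diff has_bochner_integral_Gamma)
         (use h_pos[of k] in auto)
    moreover have "(\<lambda>t. (indicator {0..} t * (t powr (1 - 1) / exp t)
        - indicator {0..} t * (t powr ((1 + h k) - 1) / exp t)) / h k) = f k"
      by (auto simp: f_def fun_eq_iff field_simps split: split_indicator)
    ultimately show ?thesis
      by simp
  qed
  have f_mono: "incseq (\<lambda>k. f k t)" for t
  proof (rule incseq_SucI)
    fix k
    show "f k t \<le> f (Suc k) t"
    proof (cases "0 < t")
      case True
      have "h (Suc k) \<le> h k"
        by (simp add: h_def field_simps)
      from powr_difference_quotient_mono[OF True h_pos this]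
      have "(t powr h (Suc k) - 1) / h (Suc k) \<le> (t powr h k - 1) / h k" .
      then have "(1 - t powr h k) / h k \<le> (1 - t powr h (Suc k)) / h (Suc k)"
        by (simp add: diff_divide_distrib)
      then have "(1 - t powr h k) / h k / exp t \<le> (1 - t powr h (Suc k)) / h (Suc k) / exp t"
        by (rule divide_right_mono) simp
      then show ?thesis
        using True by (simp add: f_def)
    qed (auto simp: f_def split: split_indicator)
  qed
  have f_lim: "(\<lambda>k. f k t) \<longlonglongrightarrow> indicator {0..} t * (- ln t / exp t)" for t
  proof (cases "0 < t")
    case True
    have "((\<lambda>y. exp (y * ln t)) has_field_derivative ln t) (at 0)"
      by (auto intro!: derivative_eq_intros)
    from difference_quotient_LIMSEQ[OF this]
    have "(\<lambda>k. (t powr h k - 1) / h k) \<longlonglongrightarrow> ln t"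
      using True by (simp add: h_def powr_def)
    then have "(\<lambda>k. indicator {0..} t * (- ((t powr h k - 1) / h k) / exp t))
        \<longlonglongrightarrow> indicator {0..} t * (- ln t / exp t)"
      by (intro tendsto_intros) auto
    moreover have "(\<lambda>k. indicator {0..} t * (- ((t powr h k - 1) / h k) / exp t)) = (\<lambda>k. f k t)"
      using True by (auto simp: f_def fun_eq_iff minus_divide_left)
    ultimately show ?thesis
      by simp
  next
    case False
    then show ?thesis
      by (auto simp: f_def split: split_indicator)
  qed
  have "(Gamma has_field_derivative - euler_mascheroni) (at (1::real))"
    using has_field_derivative_Gamma[of "1::real" UNIV] by simp
  from tendsto_minus[OF difference_quotient_LIMSEQ[OF this]]
  have "(\<lambda>k. (Gamma 1 - Gamma (1 + h k)) / h k) \<longlonglongrightarrow> euler_mascheroni"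
    by (simp add: h_def minus_divide_left)
  then have "(\<lambda>k. integral\<^sup>L lborel (f k)) \<longlonglongrightarrow> euler_mascheroni"
    using f_integral by (simp add: has_bochner_integral_iff)
  moreover have "integrable lborel (f k)" for k
    using f_integral by (simp add: has_bochner_integral_iff)
  moreover have "(\<lambda>t::real. indicator {0..} t * (- ln t / exp t)) \<in> borel_measurable lborel"
    by measurable
  moreover have "AE t in lborel. incseq (\<lambda>k. f k t)"
    using f_mono by simp
  moreover have "AE t in lborel. (\<lambda>k. f k t) \<longlonglongrightarrow> indicator {0..} t * (- ln t / exp t)"
    using f_lim by simp
  ultimately show ?thesis
    by (intro has_bochner_integral_monotone_convergence[where f = f])
qed

definition gumbel_cdf :: "real \<Rightarrow> real" where
  "gumbel_cdf t = exp (- exp (- (t + euler_mascheroni)))"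

lemma gumbel_density_nonneg: "0 \<le> gumbel_density t"
  by (simp add: gumbel_density_def)

lemma borel_measurable_gumbel_density[measurable]: "gumbel_density \<in> borel_measurable borel"
  unfolding gumbel_density_def[abs_def] by measurable

lemma sets_centered_gumbel[simp, measurable_cong]: "sets centered_gumbel = sets borel"
  by (simp add: centered_gumbel_def)

lemma space_centered_gumbel[simp]: "space centered_gumbel = UNIV"
  by (simp add: centered_gumbel_def)

lemma nn_integral_gumbel_density_atMost:
  "(\<integral>\<^sup>+t. ennreal (gumbel_density t) * indicator {..x} t \<partial>lborel) = ennreal (gumbel_cdf x)"
proof -
  have "(\<integral>\<^sup>+t. ennreal (gumbel_density t) * indicator {..x} t \<partial>lborel)
      = (\<integral>\<^sup>+s. ennreal (gumbel_density (- s)) * indicator {-x..} s \<partial>lborel)"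
    by (subst nn_integral_real_affine[where c="-1" and t=0])
       (auto intro!: nn_integral_cong split: split_indicator)
  also have "\<dots> = ennreal (0 - (- exp (- exp ((-x) - euler_mascheroni))))"
  proof (rule nn_integral_FTC_atLeast)
    fix s :: real
    show "((\<lambda>s. - exp (- exp (s - euler_mascheroni))) has_real_derivative gumbel_density (- s)) (at s)"
      by (auto intro!: derivative_eq_intros simp: gumbel_density_def)
    show "0 \<le> gumbel_density (- s)"
      by (rule gumbel_density_nonneg)
  next
    show "((\<lambda>s::real. - exp (- exp (s - euler_mascheroni))) \<longlongrightarrow> 0) at_top"
      by real_asymp
  qed simp
  finally show ?thesis
    by (simp add: gumbel_cdf_def)
qed

lemma emeasure_centered_gumbel_atMost: "emeasure centered_gumbel {..x} = ennreal (gumbel_cdf x)"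
  unfolding centered_gumbel_def
  by (subst emeasure_density) (auto simp: nn_integral_gumbel_density_atMost)

lemma prob_space_centered_gumbel: "prob_space centered_gumbel"
proof
  have "emeasure centered_gumbel UNIV = (\<integral>\<^sup>+t. ennreal (gumbel_density t) \<partial>lborel)"
    unfolding centered_gumbel_def by (subst emeasure_density) auto
  also have "\<dots> = (\<integral>\<^sup>+t. ennreal (gumbel_density t) * indicator {..0} t
      + ennreal (gumbel_density t) * indicator {0..} t \<partial>lborel)"
    by (intro nn_integral_cong_AE)
       (use AE_lborel_singleton[of 0] in \<open>auto split: split_indicator\<close>)
  also have "\<dots> = (\<integral>\<^sup>+t. ennreal (gumbel_density t) * indicator {..0} t \<partial>lborel)
      + (\<integral>\<^sup>+t. ennreal (gumbel_density t) * indicator {0..} t \<partial>lborel)"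
    by (rule nn_integral_add) auto
  also have "(\<integral>\<^sup>+t. ennreal (gumbel_density t) * indicator {0..} t \<partial>lborel) = ennreal (1 - gumbel_cdf 0)"
  proof (rule nn_integral_FTC_atLeast)
    fix s :: real
    show "(gumbel_cdf has_real_derivative gumbel_density s) (at s)"
      unfolding gumbel_cdf_def[abs_def]
      by (auto intro!: derivative_eq_intros simp: gumbel_density_def)
    show "0 \<le> gumbel_density s"
      by (rule gumbel_density_nonneg)
  next
    show "(gumbel_cdf \<longlongrightarrow> 1) at_top"
      unfolding gumbel_cdf_def[abs_def] by real_asymp
  qed auto
  also have "(\<integral>\<^sup>+t. ennreal (gumbel_density t) * indicator {..0} t \<partial>lborel) = ennreal (gumbel_cdf 0)"
    by (rule nn_integral_gumbel_density_atMost)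
  also have "ennreal (gumbel_cdf 0) + ennreal (1 - gumbel_cdf 0) = 1"
    by (subst ennreal_plus[symmetric]) (auto simp: gumbel_cdf_def)
  finally show "emeasure centered_gumbel (space centered_gumbel) = 1"
    by simp
qed

lemma real_distribution_centered_gumbel: "real_distribution centered_gumbel"
  using prob_space_centered_gumbel
  by (simp add: real_distribution_def real_distribution_axioms_def)

lemma centered_gumbel_eq_distr_exponential:
  "centered_gumbel
     = distr (density lborel (exponential_density 1)) borel (\<lambda>w. - ln w - euler_mascheroni)"
  (is "_ = distr ?E borel ?\<phi>")
proof (rule cdf_unique)
  show "real_distribution centered_gumbel"
    by (rule real_distribution_centered_gumbel)
  show "real_distribution (distr ?E borel ?\<phi>)"
    using prob_space.prob_space_distr[OF prob_space_exponential_density, of 1 ?\<phi> borel]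
    by (simp add: real_distribution_def real_distribution_axioms_def)
  show "cdf centered_gumbel = cdf (distr ?E borel ?\<phi>)"
  proof
    fix x :: real
    define c where "c = exp (- (x + euler_mascheroni))"
    have "c > 0"
      by (simp add: c_def)
    have "emeasure (distr ?E borel ?\<phi>) {..x} = (\<integral>\<^sup>+w. ennreal (exponential_density 1 w)
        * indicator {w. ?\<phi> w \<le> x} w \<partial>lborel)"
      by (subst emeasure_distr) (auto simp: vimage_def emeasure_density)
    also have "\<dots> = (\<integral>\<^sup>+w. ennreal (exp (- w)) * indicator {c..} w \<partial>lborel)"
    proof (intro nn_integral_cong_AE)
      show "AE w in lborel. ennreal (exponential_density 1 w) * indicator {w. ?\<phi> w \<le> x} w
          = ennreal (exp (- w)) * indicator {c..} w"
        using AE_lborel_singleton[of 0]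
      proof eventually_elim
        fix w :: real
        assume "w \<noteq> 0"
        show "ennreal (exponential_density 1 w) * indicator {w. ?\<phi> w \<le> x} w
            = ennreal (exp (- w)) * indicator {c..} w"
        proof (cases "w < 0")
          case False
          with \<open>w \<noteq> 0\<close> have "0 < w"
            by simp
          have "?\<phi> w \<le> x \<longleftrightarrow> - (x + euler_mascheroni) \<le> ln w"
            by auto
          also have "\<dots> \<longleftrightarrow> c \<le> w"
            unfolding c_def using \<open>0 < w\<close> by (metis exp_le_cancel_iff exp_ln)
          finally have "?\<phi> w \<le> x \<longleftrightarrow> c \<le> w" .
          then show ?thesis
            using False by (auto simp: exponential_density_def split: split_indicator)
        qed (use \<open>c > 0\<close> in \<open>auto simp: exponential_density_def split: split_indicator\<close>)
      qed
    qed
    also have "\<dots> = ennreal (0 - (- exp (- c)))"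
    proof (rule nn_integral_FTC_atLeast)
      fix s :: real
      show "((\<lambda>s. - exp (- s)) has_real_derivative exp (- s)) (at s)"
        by (auto intro!: derivative_eq_intros)
    next
      show "((\<lambda>s::real. - exp (- s)) \<longlongrightarrow> 0) at_top"
        by real_asymp
    qed auto
    also have "\<dots> = emeasure centered_gumbel {..x}"
      by (simp add: emeasure_centered_gumbel_atMost gumbel_cdf_def c_def)
    finally show "cdf centered_gumbel x = cdf (distr ?E borel ?\<phi>) x"
      by (simp add: cdf_def measure_def)
  qed
qed

lemma has_bochner_integral_centered_gumbel: "has_bochner_integral centered_gumbel (\<lambda>t. t) 0"
proof -
  let ?\<phi> = "\<lambda>w::real. - ln w - euler_mascheroni"
  have "has_bochner_integral lborel (\<lambda>w::real. indicator {0..} w * (- ln w / exp w)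
      - euler_mascheroni * (indicator {0..} w * (w powr (1 - 1) / exp w)))
      (euler_mascheroni - euler_mascheroni * Gamma 1)"
    by (intro has_bochner_integral_diff has_bochner_integral_mult_right
        has_bochner_integral_neg_ln_exp has_bochner_integral_Gamma) simp
  then have "has_bochner_integral lborel (\<lambda>w. exponential_density 1 w * ?\<phi> w)
      (euler_mascheroni - euler_mascheroni * Gamma 1)"
  proof (rule has_bochner_integral_cong_AE[THEN iffD1, rotated 3])
    show "AE w in lborel. indicator {0..} w * (- ln w / exp w)
        - euler_mascheroni * (indicator {0..} w * (w powr (1 - 1) / exp w))
        = exponential_density 1 w * ?\<phi> w"
      using AE_lborel_singleton[of 0]
      by eventually_elim
         (auto simp: exponential_density_def exp_minus field_simps split: split_indicator)
  qed auto
  moreover have "AE w in lborel. 0 \<le> exponential_density 1 w"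
    by (simp add: exponential_density_nonneg)
  ultimately have "has_bochner_integral (density lborel (exponential_density 1)) ?\<phi> 0"
    by (simp add: has_bochner_integral_iff integrable_density integral_density)
  then show ?thesis
    unfolding centered_gumbel_eq_distr_exponential
    by (simp add: has_bochner_integral_iff integrable_distr_eq integral_distr)
qed

lemma prod_gumbel_cdf_shift:
  fixes a :: "'i::finite \<Rightarrow> real"
  shows "(\<Prod>z\<in>UNIV. gumbel_cdf (t - a z)) = gumbel_cdf (t - ln (\<Sum>z\<in>UNIV. exp (a z)))"
proof -
  have pos: "0 < (\<Sum>z\<in>UNIV. exp (a z))"
    by (rule sum_pos) auto
  have "(\<Prod>z\<in>UNIV. gumbel_cdf (t - a z)) = exp (\<Sum>z\<in>UNIV. - exp (- (t - a z + euler_mascheroni)))"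
    by (simp add: gumbel_cdf_def exp_sum)
  also have "(\<Sum>z\<in>UNIV. - exp (- (t - a z + euler_mascheroni)))
      = - (exp (- (t + euler_mascheroni)) * (\<Sum>z\<in>UNIV. exp (a z)))"
    by (simp add: sum_distrib_left sum_negf exp_add[symmetric] algebra_simps)
  also have "\<dots> = - exp (- (t - ln (\<Sum>z\<in>UNIV. exp (a z)) + euler_mascheroni))"
    using pos by (simp add: exp_diff exp_minus field_simps exp_add)
  finally show ?thesis
    by (simp add: gumbel_cdf_def)
qed

lemma prob_space_iid_gumbel: "prob_space (iid_gumbel :: ('i::finite \<Rightarrow> real) measure)"
  unfolding iid_gumbel_def by (rule prob_space_PiM) (simp add: prob_space_centered_gumbel)

lemma space_iid_gumbel[simp]: "space (iid_gumbel :: ('i::finite \<Rightarrow> real) measure) = UNIV"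
  by (simp add: iid_gumbel_def space_PiM PiE_UNIV_domain)

lemma borel_measurable_Max_iid_gumbel:
  fixes a :: "'i::finite \<Rightarrow> real"
  shows "(\<lambda>e. Max (range (\<lambda>z. a z + e z))) \<in> borel_measurable (iid_gumbel :: ('i \<Rightarrow> real) measure)"
  unfolding iid_gumbel_def by (intro borel_measurable_Max) auto

lemma distr_Max_iid_gumbel:
  fixes a :: "'i::finite \<Rightarrow> real"
  shows "distr iid_gumbel borel (\<lambda>e. Max (range (\<lambda>z. a z + e z)))
       = distr centered_gumbel borel (\<lambda>s. s + ln (\<Sum>z\<in>UNIV. exp (a z)))"
    (is "distr _ _ ?M = distr _ _ (\<lambda>s. s + ?L)")
proof (rule cdf_unique)
  show "real_distribution (distr iid_gumbel borel ?M)"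
    using prob_space.prob_space_distr[OF prob_space_iid_gumbel borel_measurable_Max_iid_gumbel]
    by (simp add: real_distribution_def real_distribution_axioms_def)
  show "real_distribution (distr centered_gumbel borel (\<lambda>s. s + ?L))"
    using prob_space.prob_space_distr[OF prob_space_centered_gumbel, of "\<lambda>s. s + ?L" borel]
    by (simp add: real_distribution_def real_distribution_axioms_def)
  show "cdf (distr iid_gumbel borel ?M) = cdf (distr centered_gumbel borel (\<lambda>s. s + ?L))"
  proof
    fix t
    have ps: "product_sigma_finite (\<lambda>_::'i. centered_gumbel)"
      using prob_space_imp_sigma_finite[OF prob_space_centered_gumbel]
      by (simp add: product_sigma_finite_def)
    have "?M -` {..t} = Pi\<^sub>E UNIV (\<lambda>z. {..t - a z})"
      by (auto simp: PiE_UNIV_domain Pi_iff algebra_simps)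
    then have "emeasure (distr iid_gumbel borel ?M) {..t} = emeasure iid_gumbel (Pi\<^sub>E UNIV (\<lambda>z. {..t - a z}))"
      using borel_measurable_Max_iid_gumbel[of a] by (subst emeasure_distr) auto
    also have "\<dots> = (\<Prod>z\<in>UNIV. emeasure centered_gumbel {..t - a z})"
      unfolding iid_gumbel_def by (rule product_sigma_finite.emeasure_PiM[OF ps]) auto
    also have "\<dots> = ennreal (\<Prod>z\<in>UNIV. gumbel_cdf (t - a z))"
      by (simp add: emeasure_centered_gumbel_atMost prod_ennreal gumbel_cdf_def)
    also have "\<dots> = ennreal (gumbel_cdf (t - ?L))"
      by (simp only: prod_gumbel_cdf_shift)
    also have "\<dots> = emeasure (distr centered_gumbel borel (\<lambda>s. s + ?L)) {..t}"
    proof -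
      have "(\<lambda>s. s + ?L) -` {..t} \<inter> space centered_gumbel = {..t - ?L}"
        by auto
      then show ?thesis
        by (subst emeasure_distr) (auto simp: emeasure_centered_gumbel_atMost)
    qed
    finally show "cdf (distr iid_gumbel borel ?M) t = cdf (distr centered_gumbel borel (\<lambda>s. s + ?L)) t"
      by (simp add: cdf_def measure_def)
  qed
qed

lemma integral_Max_iid_gumbel:
  fixes a :: "'i::finite \<Rightarrow> real"
  shows "(\<integral>e. Max (range (\<lambda>z. a z + e z)) \<partial>iid_gumbel) = ln (\<Sum>z\<in>UNIV. exp (a z))"
proof -
  define L where "L = ln (\<Sum>z\<in>UNIV. exp (a z))"
  have "(\<integral>e. Max (range (\<lambda>z. a z + e z)) \<partial>iid_gumbel)
      = (\<integral>x. x \<partial>distr iid_gumbel borel (\<lambda>e. Max (range (\<lambda>z. a z + e z))))"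
    using borel_measurable_Max_iid_gumbel by (subst integral_distr) auto
  also have "\<dots> = (\<integral>x. x \<partial>distr centered_gumbel borel (\<lambda>s. s + L))"
    by (simp add: distr_Max_iid_gumbel L_def)
  also have "\<dots> = (\<integral>s. s + L \<partial>centered_gumbel)"
    by (subst integral_distr) auto
  also have "\<dots> = (\<integral>s. s \<partial>centered_gumbel) + (\<integral>s. L \<partial>centered_gumbel)"
    using has_bochner_integral_centered_gumbel
      finite_measure.integrable_const[OF prob_space.finite_measure[OF prob_space_centered_gumbel]]
    by (intro Bochner_Integration.integral_add) (auto simp: has_bochner_integral_iff)
  also have "\<dots> = L"
    using has_bochner_integral_centered_gumbel prob_space.prob_space[OF prob_space_centered_gumbel]
    by (simp add: has_bochner_integral_iff measure_def)
  finally show ?thesis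
    by (simp add: L_def)
qed

section \<open>The logit conjugate\<close>

definition logit_obj :: "('j::finite \<Rightarrow> real) \<Rightarrow> real \<Rightarrow> ('j \<Rightarrow> real) \<Rightarrow> real" where
  "logit_obj c n w = (\<Sum>j\<in>UNIV. c j * w j) - n * ln (1 + (\<Sum>j\<in>UNIV. exp (w j)))"

definition logit_conj :: "('j::finite \<Rightarrow> real) \<Rightarrow> real \<Rightarrow> real" where
  "logit_conj c n = (\<Sum>j\<in>UNIV. c j * ln (c j / n)) + (n - sum c UNIV) * ln ((n - sum c UNIV) / n)"

lemma mult_ln_ratio_le:
  fixes c n S v :: real
  assumes "0 \<le> c" and "0 < n" and "0 < S"
  shows "c * v - c * ln (c / n) - c * ln S \<le> n * exp v / S - c"
proof (cases "c = 0")
  case False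
  with assms have "0 < c"
    by simp
  with assms have "c * v - c * ln (c / n) - c * ln S = c * ln (n * exp v / (c * S))"
    by (simp add: ln_div ln_mult algebra_simps)
  also have "\<dots> \<le> c * (n * exp v / (c * S) - 1)"
    using ln_le_minus_one[of "n * exp v / (c * S)"] \<open>0 < c\<close> assms by (intro mult_left_mono) auto
  also have "\<dots> = n * exp v / S - c"
    using \<open>0 < c\<close> assms by (simp add: field_simps)
  finally show ?thesis .
qed (use assms in simp)

text \<open>Gibbs' inequality, with the singles treated as an extra option of utility \<open>0\<close>.\<close>
lemma logit_obj_le_logit_conj:
  fixes c :: "'j::finite \<Rightarrow> real"
  assumes c: "\<And>j. 0 \<le> c j" and n: "0 < n" and c0: "0 \<le> n - sum c UNIV"
  shows "logit_obj c n w \<le> logit_conj c n"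
proof -
  define S where "S = 1 + (\<Sum>j\<in>UNIV. exp (w j))"
  have S: "0 < S"
    unfolding S_def by (intro add_pos_nonneg sum_nonneg) auto
  define c0 where "c0 = n - sum c UNIV"
  have "(\<Sum>j\<in>UNIV. c j * ln S) = sum c UNIV * ln S"
    by (simp add: sum_distrib_right)
  then have "n * ln S = (\<Sum>j\<in>UNIV. c j * ln S) + c0 * ln S"
    by (simp add: c0_def algebra_simps)
  then have "logit_obj c n w - logit_conj c n
      = (\<Sum>j\<in>UNIV. c j * w j - c j * ln (c j / n) - c j * ln S) + (c0 * 0 - c0 * ln (c0 / n) - c0 * ln S)"
    by (simp add: logit_obj_def logit_conj_def S_def[symmetric] c0_def[symmetric]
        sum_subtractf sum.distrib algebra_simps)
  also have "\<dots> \<le> (\<Sum>j\<in>UNIV. n * exp (w j) / S - c j) + (n * exp 0 / S - c0)"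
    by (intro add_mono sum_mono mult_ln_ratio_le) (use c n S c0 in \<open>auto simp: c0_def\<close>)
  also have "\<dots> = 0"
  proof -
    have "(\<Sum>j\<in>UNIV. n * exp (w j) / S) + n / S = n * S / S"
      by (simp add: S_def sum_divide_distrib[symmetric] sum_distrib_left[symmetric]
          add_divide_distrib[symmetric] algebra_simps)
    then show ?thesis
      using S by (simp add: sum_subtractf c0_def)
  qed
  finally show ?thesis
    by simp
qed

lemma logit_obj_ln_ratio:
  fixes c d :: "'j::finite \<Rightarrow> real"
  assumes d: "\<And>j. 0 < d j" and d0: "0 < d0"
  shows "logit_obj c n (\<lambda>j. ln (d j) - ln d0)
     = (\<Sum>j\<in>UNIV. c j * ln (d j)) + (n - sum c UNIV) * ln d0 - n * ln (d0 + sum d UNIV)"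
proof -
  have "0 < d0 + sum d UNIV"
    using d d0 by (intro add_pos_nonneg sum_nonneg) (auto intro: less_imp_le)
  moreover have "1 + (\<Sum>j\<in>UNIV. exp (ln (d j) - ln d0)) = (d0 + sum d UNIV) / d0"
    using d d0 by (simp add: exp_diff sum_divide_distrib[symmetric] field_simps)
  ultimately have "n * ln (1 + (\<Sum>j\<in>UNIV. exp (ln (d j) - ln d0)))
      = n * ln (d0 + sum d UNIV) - n * ln d0"
    using d0 by (simp add: ln_div right_diff_distrib)
  moreover have "(\<Sum>j\<in>UNIV. c j * (ln (d j) - ln d0)) = (\<Sum>j\<in>UNIV. c j * ln (d j)) - sum c UNIV * ln d0"
    by (simp add: right_diff_distrib sum_subtractf sum_distrib_right)
  ultimately show ?thesis
    unfolding logit_obj_def by (simp add: algebra_simps)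
qed

lemma logit_conj_eq:
  fixes c :: "'j::finite \<Rightarrow> real"
  assumes c: "\<And>j. 0 \<le> c j" and n: "0 < n" and c0: "0 \<le> n - sum c UNIV"
  shows "logit_conj c n
    = (\<Sum>j\<in>UNIV. c j * ln (c j)) + (n - sum c UNIV) * ln (n - sum c UNIV) - n * ln n"
proof -
  have ln_ratio: "a * ln (a / n) = a * ln a - a * ln n" if "0 \<le> a" for a
    using that n by (cases "a = 0") (auto simp: ln_div algebra_simps)
  have "(\<Sum>j\<in>UNIV. c j * ln (c j / n)) = (\<Sum>j\<in>UNIV. c j * ln (c j)) - sum c UNIV * ln n"
    by (simp add: ln_ratio c sum_subtractf sum_distrib_right)
  then show ?thesis
    unfolding logit_conj_def ln_ratio[OF c0] by (simp add: algebra_simps)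
qed

lemma logit_obj_eq_logit_conj:
  fixes c :: "'j::finite \<Rightarrow> real"
  assumes "\<And>j. 0 < c j" and "0 < n" and "0 < n - sum c UNIV"
  shows "logit_obj c n (\<lambda>j. ln (c j) - ln (n - sum c UNIV)) = logit_conj c n"
  using logit_obj_ln_ratio[of c "n - sum c UNIV" c n] logit_conj_eq[of c n] assms
  by (simp add: less_imp_le)

text \<open>On the boundary, where some \<open>c j\<close> or \<open>n - sum c UNIV\<close> vanishes, the supremum is only
  approached, by perturbing all masses by \<open>e\<close>.\<close>
lemma tendsto_logit_obj_logit_conj:
  fixes c :: "'j::finite \<Rightarrow> real"
  assumes c: "\<And>j. 0 \<le> c j" and n: "0 < n" and c0: "0 \<le> n - sum c UNIV"
  shows "((\<lambda>e. logit_obj c n (\<lambda>j. ln (c j + e) - ln (n - sum c UNIV + e))) \<longlongrightarrow> logit_conj c n)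
    (at_right 0)"
proof -
  define c0 where "c0 = n - sum c UNIV"
  have xlnx: "((\<lambda>e. a * ln (a + e)) \<longlongrightarrow> a * ln a) (at_right 0)" if "0 \<le> a" for a :: real
  proof (cases "a = 0")
    case False
    with that have "((\<lambda>e. a * ln (a + e)) \<longlongrightarrow> a * ln (a + 0)) (at 0)"
      by (intro tendsto_intros) auto
    then show ?thesis
      by (simp add: tendsto_at_iff_tendsto_nhds_within filterlim_at_split)
  qed simp
  have "((\<lambda>e. c0 + e + (\<Sum>j\<in>UNIV. c j + e)) \<longlongrightarrow> c0 + 0 + (\<Sum>j\<in>UNIV. c j + 0)) (at_right 0)"
    by (intro tendsto_intros)
  then have "((\<lambda>e. n * ln (c0 + e + (\<Sum>j\<in>UNIV. c j + e))) \<longlongrightarrow> n * ln (c0 + sum c UNIV)) (at_right 0)"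
    using n by (intro tendsto_mult_left tendsto_ln) (auto simp: c0_def)
  then have "((\<lambda>e. (\<Sum>j\<in>UNIV. c j * ln (c j + e)) + c0 * ln (c0 + e) - n * ln (c0 + e + sum (\<lambda>j. c j + e) UNIV))
      \<longlongrightarrow> (\<Sum>j\<in>UNIV. c j * ln (c j)) + c0 * ln c0 - n * ln (c0 + sum c UNIV)) (at_right 0)"
    using c c0 by (intro tendsto_diff tendsto_add tendsto_sum xlnx) (auto simp: c0_def)
  moreover have "\<forall>\<^sub>F e in at_right 0.
      (\<Sum>j\<in>UNIV. c j * ln (c j + e)) + c0 * ln (c0 + e) - n * ln (c0 + e + sum (\<lambda>j. c j + e) UNIV)
      = logit_obj c n (\<lambda>j. ln (c j + e) - ln (n - sum c UNIV + e))"
    using eventually_at_right_less[of 0]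
  proof eventually_elim
    case (elim e)
    then show ?case
      using logit_obj_ln_ratio[of "\<lambda>j. c j + e" "c0 + e" c n] c c0
      by (simp add: c0_def add_nonneg_pos add_pos_nonneg algebra_simps)
  qed
  ultimately have "((\<lambda>e. logit_obj c n (\<lambda>j. ln (c j + e) - ln (n - sum c UNIV + e)))
      \<longlongrightarrow> (\<Sum>j\<in>UNIV. c j * ln (c j)) + c0 * ln c0 - n * ln (c0 + sum c UNIV)) (at_right 0)"
    by (rule Lim_transform_eventually)
  then show ?thesis
    using logit_conj_eq[OF c n c0] by (simp add: c0_def)
qed

lemma logit_obj_argmax:
  fixes c :: "'j::finite \<Rightarrow> real"
  assumes max: "\<And>w'. logit_obj c n w' \<le> logit_obj c n w"
  shows "c j = n * exp (w j) / (1 + (\<Sum>i\<in>UNIV. exp (w i)))"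
proof -
  define d where "d i = (if i = j then 1 else (0::real))" for i
  define S where "S = 1 + (\<Sum>i\<in>UNIV. exp (w i))"
  have "0 < S"
    unfolding S_def by (intro add_pos_nonneg sum_nonneg) auto
  have "((\<lambda>t. 1 + (\<Sum>i\<in>UNIV. exp (w i + t * d i)))
      has_real_derivative (\<Sum>i\<in>UNIV. exp (w i + 0 * d i) * d i)) (at 0)"
    by (intro derivative_eq_intros DERIV_sum) auto
  from DERIV_chain2[OF DERIV_ln this] \<open>0 < S\<close>
  have "((\<lambda>t. ln (1 + (\<Sum>i\<in>UNIV. exp (w i + t * d i)))) has_real_derivative exp (w j) / S) (at 0)"
    by (simp add: S_def d_def if_distrib field_simps cong: if_cong)
  moreover have "((\<lambda>t. \<Sum>i\<in>UNIV. c i * (w i + t * d i)) has_real_derivative (\<Sum>i\<in>UNIV. c i * d i)) (at 0)"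
    by (intro derivative_eq_intros DERIV_sum) auto
  ultimately have "((\<lambda>t. logit_obj c n (\<lambda>i. w i + t * d i))
      has_real_derivative (\<Sum>i\<in>UNIV. c i * d i) - n * (exp (w j) / S)) (at 0)"
    unfolding logit_obj_def by (intro DERIV_diff DERIV_cmult)
  moreover have "(\<Sum>i\<in>UNIV. c i * d i) = c j"
    by (simp add: d_def if_distrib cong: if_cong)
  ultimately have "c j - n * (exp (w j) / S) = 0"
    by (intro DERIV_local_max[OF _ zero_less_one]) (use max in auto)
  then show ?thesis
    by (simp add: S_def)
qed

lemma SUP_eq_ereal_of_tendsto:
  fixes f :: "'a \<Rightarrow> real"
  assumes "\<And>U. f U \<le> C" and "((\<lambda>e. f (W e)) \<longlongrightarrow> C) F" and "F \<noteq> bot"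
  shows "(SUP U. ereal (f U)) = ereal C"
proof (rule antisym)
  show "(SUP U. ereal (f U)) \<le> ereal C"
    by (rule SUP_least) (simp add: assms(1))
  have "((\<lambda>e. ereal (f (W e))) \<longlongrightarrow> ereal C) F"
    using assms(2) by (rule tendsto_ereal)
  then show "ereal C \<le> (SUP U. ereal (f U))"
    by (rule tendsto_le[OF assms(3) tendsto_const]) (auto intro!: always_eventually SUP_upper)
qed

section \<open>The function \<open>F\<close>\<close>

lemma Ffun_swap: "Ffun Phi n m u v = Ffun (\<lambda>y x. Phi x y) m n v u"
  unfolding Ffun_def by (subst (2) sum.swap) (simp add: mult.commute algebra_simps)

lemma exp_convex_combination_less:
  fixes a b t :: real
  assumes "a \<noteq> b" and "0 < t" and "t < 1"
  shows "exp (t * a + (1 - t) * b) < t * exp a + (1 - t) * exp b"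
proof -
  define c where "c = t * a + (1 - t) * b"
  have "a - c = (1 - t) * (a - b)" and "b - c = t * (b - a)"
    by (simp_all add: c_def algebra_simps)
  with assms have "a \<noteq> c" and "b \<noteq> c"
    by auto
  have above_tangent: "exp c * (1 + (z - c)) < exp z" if "z \<noteq> c" for z
    using exp_minus_greater[of "c - z"] that by (simp add: exp_diff field_simps)
  have "exp c = t * (exp c * (1 + (a - c))) + (1 - t) * (exp c * (1 + (b - c)))"
    by (simp add: c_def algebra_simps)
  also have "\<dots> < t * exp a + (1 - t) * exp b"
    using above_tangent[OF \<open>a \<noteq> c\<close>] above_tangent[OF \<open>b \<noteq> c\<close>] assms
    by (intro add_strict_mono mult_strict_left_mono) auto
  finally show ?thesis
    by (simp add: c_def)
qed

lemma exp_convex_combination_le: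
  fixes a b t :: real
  assumes "0 \<le> t" and "t \<le> 1"
  shows "exp (t * a + (1 - t) * b) \<le> t * exp a + (1 - t) * exp b"
  using convex_onD[OF exp_convex, of t b a] assms by (simp add: algebra_simps)

lemma mass_term_convex_combination:
  fixes k s s' t :: real
  assumes "0 < k" and "0 < t" and "t < 1"
  shows "k * ((t * s + (1 - t) * s') + exp (- (t * s + (1 - t) * s')) - 1)
      \<le> t * (k * (s + exp (- s) - 1)) + (1 - t) * (k * (s' + exp (- s') - 1))"
    and "s \<noteq> s' \<Longrightarrow> k * ((t * s + (1 - t) * s') + exp (- (t * s + (1 - t) * s')) - 1)
      < t * (k * (s + exp (- s) - 1)) + (1 - t) * (k * (s' + exp (- s') - 1))"
proof -
  have e: "- (t * s + (1 - t) * s') = t * (- s) + (1 - t) * (- s')"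
    by (simp add: algebra_simps)
  have le: "exp (- (t * s + (1 - t) * s')) \<le> t * exp (- s) + (1 - t) * exp (- s')"
    unfolding e by (rule exp_convex_combination_le) (use assms in auto)
  then show "k * ((t * s + (1 - t) * s') + exp (- (t * s + (1 - t) * s')) - 1)
      \<le> t * (k * (s + exp (- s) - 1)) + (1 - t) * (k * (s' + exp (- s') - 1))"
    using mult_left_mono[OF le, of k] assms by (simp add: algebra_simps)
  assume "s \<noteq> s'"
  then have less: "exp (- (t * s + (1 - t) * s')) < t * exp (- s) + (1 - t) * exp (- s')"
    unfolding e by (intro exp_convex_combination_less) (use assms in auto)
  then show "k * ((t * s + (1 - t) * s') + exp (- (t * s + (1 - t) * s')) - 1)
      < t * (k * (s + exp (- s) - 1)) + (1 - t) * (k * (s' + exp (- s') - 1))"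
    using mult_strict_left_mono[OF less, of k] assms by (simp add: algebra_simps)
qed

lemma coupling_term_convex_combination:
  fixes k p p' q q' t :: real
  assumes "0 \<le> k" and "0 \<le> t" and "t \<le> 1"
  shows "k * exp ((P - (t * p + (1 - t) * p') - (t * q + (1 - t) * q')) / 2)
      \<le> t * (k * exp ((P - p - q) / 2)) + (1 - t) * (k * exp ((P - p' - q') / 2))"
proof -
  have e: "(P - (t * p + (1 - t) * p') - (t * q + (1 - t) * q')) / 2
      = t * ((P - p - q) / 2) + (1 - t) * ((P - p' - q') / 2)"
    by (simp add: algebra_simps add_divide_distrib diff_divide_distrib)
  have "exp ((P - (t * p + (1 - t) * p') - (t * q + (1 - t) * q')) / 2)
      \<le> t * exp ((P - p - q) / 2) + (1 - t) * exp ((P - p' - q') / 2)"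
    unfolding e by (rule exp_convex_combination_le[OF assms(2,3)])
  then show ?thesis
    using assms(1) by (auto simp: algebra_simps dest: mult_left_mono[of _ _ k])
qed

lemma Ffun_convex_combination_less_if_u:
  fixes Phi :: "'x::finite \<Rightarrow> 'y::finite \<Rightarrow> real"
  assumes n: "\<forall>x. 0 < n x" and m: "\<forall>y. 0 < m y"
    and "u \<noteq> u'" and t: "0 < t" "t < 1"
  shows "Ffun Phi n m (\<lambda>x. t * u x + (1 - t) * u' x) (\<lambda>y. t * v y + (1 - t) * v' y)
      < t * Ffun Phi n m u v + (1 - t) * Ffun Phi n m u' v'"
proof -
  define A where "A x s = n x * (s + exp (- s) - 1)" for x s
  define B where "B y s = m y * (s + exp (- s) - 1)" for y s
  define C where "C x y p q = sqrt (n x * m y) * exp ((Phi x y - p - q) / 2)" for x y p q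
  have F: "Ffun Phi n m u v = (\<Sum>x\<in>UNIV. A x (u x)) + (\<Sum>y\<in>UNIV. B y (v y))
      + 2 * (\<Sum>x\<in>UNIV. \<Sum>y\<in>UNIV. C x y (u x) (v y))" for u v
    by (simp add: Ffun_def A_def B_def C_def)
  have A_le: "A x (t * u x + (1 - t) * u' x) \<le> t * A x (u x) + (1 - t) * A x (u' x)" for x
    unfolding A_def using mass_term_convex_combination(1)[of "n x" t "u x" "u' x"] n t by simp
  have A_less: "u x \<noteq> u' x \<Longrightarrow> A x (t * u x + (1 - t) * u' x) < t * A x (u x) + (1 - t) * A x (u' x)" for x
    unfolding A_def using mass_term_convex_combination(2)[of "n x" t "u x" "u' x"] n t by simp
  from \<open>u \<noteq> u'\<close> obtain x0 where "u x0 \<noteq> u' x0"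
    by auto
  then have "(\<Sum>x\<in>UNIV. A x (t * u x + (1 - t) * u' x)) < (\<Sum>x\<in>UNIV. t * A x (u x) + (1 - t) * A x (u' x))"
    by (intro sum_strict_mono_ex1) (auto intro: A_le A_less)
  moreover have "(\<Sum>y\<in>UNIV. B y (t * v y + (1 - t) * v' y)) \<le> (\<Sum>y\<in>UNIV. t * B y (v y) + (1 - t) * B y (v' y))"
    using mass_term_convex_combination(1) m t unfolding B_def by (intro sum_mono) simp
  moreover have "(\<Sum>x\<in>UNIV. \<Sum>y\<in>UNIV. C x y (t * u x + (1 - t) * u' x) (t * v y + (1 - t) * v' y))
      \<le> (\<Sum>x\<in>UNIV. \<Sum>y\<in>UNIV. t * C x y (u x) (v y) + (1 - t) * C x y (u' x) (v' y))"
    using n m t unfolding C_def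
    by (intro sum_mono coupling_term_convex_combination) (auto simp: less_imp_le)
  moreover have comb: "(\<Sum>i\<in>I. t * f i + (1 - t) * g i) = t * sum f I + (1 - t) * sum g I"
    for I and f g :: "'z \<Rightarrow> real"
    by (simp add: sum.distrib sum_distrib_left)
  ultimately show ?thesis
    unfolding F comb by (simp add: algebra_simps)
qed

lemma Ffun_strictly_convex:
  fixes Phi :: "'x::finite \<Rightarrow> 'y::finite \<Rightarrow> real"
  assumes n: "\<forall>x. 0 < n x" and m: "\<forall>y. 0 < m y"
    and "(u, v) \<noteq> (u', v')" and t: "0 < t" "t < 1"
  shows "Ffun Phi n m (\<lambda>x. t * u x + (1 - t) * u' x) (\<lambda>y. t * v y + (1 - t) * v' y)
      < t * Ffun Phi n m u v + (1 - t) * Ffun Phi n m u' v'"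
proof (cases "u = u'")
  case True
  with assms have "v \<noteq> v'"
    by auto
  from Ffun_convex_combination_less_if_u[OF m n this t, of "\<lambda>y x. Phi x y" u u']
  show ?thesis
    by (simp only: Ffun_swap[of _ m n])
qed (use Ffun_convex_combination_less_if_u[OF n m _ t] in blast)

lemma abs_le_mass_term: "\<bar>s\<bar> - 1 \<le> s + exp (- s) - (1::real)"
proof (cases "0 \<le> s")
  case False
  have "(1 + (- s / 2))\<^sup>2 \<le> (exp (- s / 2))\<^sup>2"
    using False exp_ge_add_one_self[of "- s / 2"] by (intro power_mono) auto
  also have "\<dots> = exp (- s)"
    by (simp add: power2_eq_square exp_add[symmetric])
  finally have "(1 + (- s / 2))\<^sup>2 \<le> exp (- s)" .
  moreover have "(1 + (- s / 2))\<^sup>2 = - 2 * s + (1 + s / 2)\<^sup>2"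
    by (simp add: power2_eq_square algebra_simps)
  ultimately show ?thesis
    using False zero_le_power2[of "1 + s / 2"] by linarith
qed simp

lemma mass_term_nonneg: "0 \<le> s + exp (- s) - (1::real)"
  using exp_ge_add_one_self[of "- s"] by simp

lemma Ffun_ge_mass_term:
  fixes Phi :: "'x::finite \<Rightarrow> 'y::finite \<Rightarrow> real"
  assumes n: "\<forall>x. 0 < n x" and m: "\<forall>y. 0 < m y"
  shows "n x * (\<bar>u x\<bar> - 1) \<le> Ffun Phi n m u v"
proof -
  have mass_nonneg: "0 \<le> k * (s + exp (- s) - 1)" if "0 < k" for k s :: real
    using that mass_term_nonneg[of s] by simp
  have "n x * (\<bar>u x\<bar> - 1) \<le> n x * (u x + exp (- u x) - 1)"
    using n abs_le_mass_term[of "u x"] by (intro mult_left_mono) (auto intro: less_imp_le)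
  also have "\<dots> \<le> (\<Sum>x\<in>UNIV. n x * (u x + exp (- u x) - 1))"
    using n by (intro member_le_sum mass_nonneg) auto
  also have "\<dots> \<le> Ffun Phi n m u v"
  proof -
    have "0 \<le> (\<Sum>y\<in>UNIV. m y * (v y + exp (- v y) - 1))"
      using m by (intro sum_nonneg mass_nonneg) auto
    moreover have "0 \<le> (\<Sum>x\<in>UNIV. \<Sum>y\<in>UNIV. sqrt (n x * m y) * exp ((Phi x y - u x - v y) / 2))"
      using n m by (intro sum_nonneg mult_nonneg_nonneg) (auto intro: less_imp_le)
    ultimately show ?thesis
      unfolding Ffun_def by simp
  qed
  finally show ?thesis .
qed

lemma abs_le_if_Ffun_le:
  fixes Phi :: "'x::finite \<Rightarrow> 'y::finite \<Rightarrow> real"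
  assumes n: "\<forall>x. 0 < n x" and m: "\<forall>y. 0 < m y" and "Ffun Phi n m u v \<le> C"
  shows "\<bar>u x\<bar> \<le> C / n x + 1" and "\<bar>v y\<bar> \<le> C / m y + 1"
proof -
  have "n x * (\<bar>u x\<bar> - 1) \<le> C"
    using Ffun_ge_mass_term[OF n m, of x u Phi v] assms(3) by simp
  moreover have "m y * (\<bar>v y\<bar> - 1) \<le> C"
    using Ffun_ge_mass_term[OF m n, of y v "\<lambda>y x. Phi x y" u] assms(3) Ffun_swap[of Phi n m u v]
    by simp
  ultimately have "\<bar>u x\<bar> - 1 \<le> C / n x" and "\<bar>v y\<bar> - 1 \<le> C / m y"
    using n m by (simp_all add: pos_le_divide_eq mult.commute)
  then show "\<bar>u x\<bar> \<le> C / n x + 1" and "\<bar>v y\<bar> \<le> C / m y + 1"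
    by simp_all
qed

text \<open>\<open>F\<close> is coercive, so it attains its infimum on a large enough closed ball in
  \<open>real^'x \<times> real^'y\<close>.\<close>
lemma Ffun_has_minimizer:
  fixes Phi :: "'x::finite \<Rightarrow> 'y::finite \<Rightarrow> real"
  assumes n: "\<forall>x. 0 < n x" and m: "\<forall>y. 0 < m y"
  shows "\<exists>u v. \<forall>u' v'. Ffun Phi n m u v \<le> Ffun Phi n m u' v'"
proof -
  define F where "F z = Ffun Phi n m (\<lambda>x. fst z $ x) (\<lambda>y. snd z $ y)" for z :: "(real^'x) \<times> (real^'y)"
  define C where "C = F 0"
  define R where "R = (\<Sum>x\<in>UNIV. C / n x + 1) + (\<Sum>y\<in>UNIV. C / m y + 1)"
  have bounded: "norm z \<le> R" if "F z \<le> C" for z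
  proof -
    have "norm z \<le> norm (fst z) + norm (snd z)"
      using norm_Pair_le[of "fst z" "snd z"] by simp
    also have "\<dots> \<le> (\<Sum>x\<in>UNIV. \<bar>fst z $ x\<bar>) + (\<Sum>y\<in>UNIV. \<bar>snd z $ y\<bar>)"
      by (intro add_mono norm_le_l1_cart)
    also have "\<dots> \<le> R"
      unfolding R_def using abs_le_if_Ffun_le[OF n m that[unfolded F_def]]
      by (intro add_mono sum_mono)
    finally show ?thesis .
  qed
  then have "0 \<le> R"
    using bounded[of 0] by (simp add: C_def)
  have "continuous_on (cball 0 R) F"
    unfolding F_def Ffun_def by (intro continuous_intros) auto
  with \<open>0 \<le> R\<close> obtain z where "z \<in> cball 0 R" and z_min: "\<And>z'. z' \<in> cball 0 R \<Longrightarrow> F z \<le> F z'"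
    using continuous_attains_inf[of "cball 0 R" F] by auto
  have z_glob_min: "F z \<le> F z'" for z'
  proof (cases "F z' \<le> C")
    case True
    then show ?thesis
      using bounded z_min by simp
  next
    case False
    then show ?thesis
      using z_min[of 0] \<open>0 \<le> R\<close> by (simp add: C_def)
  qed
  have "Ffun Phi n m (\<lambda>x. fst z $ x) (\<lambda>y. snd z $ y) \<le> Ffun Phi n m u' v'" for u' v'
    using z_glob_min[of "(\<chi> x. u' x, \<chi> y. v' y)"] by (simp add: F_def)
  then show ?thesis
    by blast
qed

lemma Ffun_minimizer_eq:
  fixes Phi :: "'x::finite \<Rightarrow> 'y::finite \<Rightarrow> real"
  assumes min: "\<forall>u' v'. Ffun Phi n m u v \<le> Ffun Phi n m u' v'"
  shows "n x0 * exp (- u x0) = n x0 - (\<Sum>y\<in>UNIV. sqrt (n x0 * m y) * exp ((Phi x0 y - u x0 - v y) / 2))"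
proof -
  define K where "K = (\<Sum>y\<in>UNIV. sqrt (n x0 * m y) * exp ((Phi x0 y - u x0 - v y) / 2))"
  have mass: "((\<lambda>s. n x * ((u(x0 := s)) x + exp (- (u(x0 := s)) x) - 1))
      has_real_derivative (if x = x0 then n x0 * (1 - exp (- u x0)) else 0)) (at (u x0))" for x
    by (cases "x = x0") (auto intro!: derivative_eq_intros simp: algebra_simps)
  have coupling: "((\<lambda>s. \<Sum>y\<in>UNIV. sqrt (n x * m y) * exp ((Phi x y - (u(x0 := s)) x - v y) / 2))
      has_real_derivative (if x = x0 then - K / 2 else 0)) (at (u x0))" for x
  proof (cases "x = x0")
    case True
    have "((\<lambda>s. \<Sum>y\<in>UNIV. sqrt (n x0 * m y) * exp ((Phi x0 y - s - v y) / 2)) has_real_derivative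
        (\<Sum>y\<in>UNIV. sqrt (n x0 * m y) * (exp ((Phi x0 y - u x0 - v y) / 2) * (- 1 / 2)))) (at (u x0))"
      by (intro DERIV_sum DERIV_cmult) (auto intro!: derivative_eq_intros)
    then show ?thesis
      using True by (simp add: K_def sum_negf sum_divide_distrib)
  qed simp
  have "((\<lambda>s. Ffun Phi n m (u(x0 := s)) v) has_real_derivative
      (\<Sum>x\<in>UNIV. if x = x0 then n x0 * (1 - exp (- u x0)) else 0) + 0
      + 2 * (\<Sum>x\<in>UNIV. if x = x0 then - K / 2 else 0)) (at (u x0))"
    unfolding Ffun_def by (intro DERIV_add DERIV_sum DERIV_cmult mass coupling DERIV_const)
  then have "((\<lambda>s. Ffun Phi n m (u(x0 := s)) v) has_real_derivative n x0 * (1 - exp (- u x0)) - K) (at (u x0))"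
    by simp
  then have "n x0 * (1 - exp (- u x0)) - K = 0"
    by (rule DERIV_local_min[OF _ zero_less_one]) (use min in simp)
  then show ?thesis
    by (simp add: K_def algebra_simps)
qed

lemma Ffun_minimizer_swap:
  "(\<forall>u' v'. Ffun Phi n m u v \<le> Ffun Phi n m u' v')
    \<longleftrightarrow> (\<forall>v' u'. Ffun (\<lambda>y x. Phi x y) m n v u \<le> Ffun (\<lambda>y x. Phi x y) m n v' u')"
  by (metis Ffun_swap)

section \<open>Surplus functions of Gumbel heterogeneity\<close>

lemma sum_UNIV_option:
  fixes f :: "'a::finite option \<Rightarrow> 'b::comm_monoid_add"
  shows "(\<Sum>z\<in>UNIV. f z) = f None + (\<Sum>y\<in>UNIV. f (Some y))"
  by (simp add: UNIV_option_conv sum.reindex)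

lemma avg_util_men_iid_gumbel:
  fixes P :: "'x \<Rightarrow> ('y::finite option \<Rightarrow> real) measure"
  assumes "P x = iid_gumbel"
  shows "avg_util_men P U x = ln (1 + (\<Sum>y\<in>UNIV. exp (U x y)))"
  unfolding avg_util_men_def assms integral_Max_iid_gumbel
  by (simp add: sum_UNIV_option Uext_def)

lemma avg_util_women_eq_avg_util_men:
  "avg_util_women Q V y = avg_util_men Q (\<lambda>y x. V x y) y"
  by (simp add: avg_util_women_def avg_util_men_def Uext_def Vext_def)

lemma H_eq_G: "H Q V m = G Q (\<lambda>y x. V x y) m"
  by (simp add: H_def G_def avg_util_women_eq_avg_util_men)

lemma mu_0y_eq_mu_x0: "mu_0y mu m y = mu_x0 (\<lambda>y x. mu x y) m y"
  by (simp add: mu_0y_def mu_x0_def)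

lemma SUP_transpose:
  fixes g :: "('y \<Rightarrow> 'x \<Rightarrow> 'a) \<Rightarrow> 'b::complete_lattice"
  shows "(SUP V. g (\<lambda>y x. V x y)) = (SUP U. g U)"
proof (rule SUP_eq)
  show "\<exists>U\<in>UNIV. g (\<lambda>y x. V x y) \<le> g U" for V
    by blast
  show "\<exists>V\<in>UNIV. g U \<le> g (\<lambda>y x. V x y)" for U
    by (rule bexI[of _ "\<lambda>x y. U y x"]) simp_all
qed

lemma Hstar_eq_Gstar: "Hstar Q mu m = Gstar Q (\<lambda>y x. mu x y) m"
proof -
  have "Gstar Q (\<lambda>y x. mu x y) m
      = (SUP V. ereal ((\<Sum>y\<in>UNIV. \<Sum>x\<in>UNIV. mu x y * V x y) - G Q (\<lambda>y x. V x y) m))"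
    unfolding Gstar_def
    by (rule SUP_transpose[symmetric,
          where g = "\<lambda>U. ereal ((\<Sum>y\<in>UNIV. \<Sum>x\<in>UNIV. mu x y * U y x) - G Q U m)"])
  also have "\<dots> = Hstar Q mu m"
    unfolding Hstar_def H_eq_G by (subst sum.swap) (rule refl)
  finally show ?thesis ..
qed

lemma G_iid_gumbel:
  fixes P :: "'x::finite \<Rightarrow> ('y::finite option \<Rightarrow> real) measure"
  assumes "\<forall>x. P x = iid_gumbel"
  shows "(\<Sum>x\<in>UNIV. \<Sum>y\<in>UNIV. mu x y * U x y) - G P U n = (\<Sum>x\<in>UNIV. logit_obj (mu x) (n x) (U x))"
  using assms by (simp add: G_def avg_util_men_iid_gumbel logit_obj_def sum_subtractf)

lemma Gstar_iid_gumbel: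
  fixes P :: "'x::finite \<Rightarrow> ('y::finite option \<Rightarrow> real) measure"
  assumes P: "\<forall>x. P x = iid_gumbel" and n: "\<forall>x. 0 < n x"
    and mu: "\<forall>x y. 0 \<le> mu x y" and mu0: "\<forall>x. 0 \<le> mu_x0 mu n x"
  shows "Gstar P mu n = ereal (\<Sum>x\<in>UNIV. logit_conj (mu x) (n x))"
  unfolding Gstar_def G_iid_gumbel[OF P]
proof (rule SUP_eq_ereal_of_tendsto)
  show "(\<Sum>x\<in>UNIV. logit_obj (mu x) (n x) (U x)) \<le> (\<Sum>x\<in>UNIV. logit_conj (mu x) (n x))" for U
    using n mu mu0 by (intro sum_mono logit_obj_le_logit_conj) (auto simp: mu_x0_def)
  show "((\<lambda>e. \<Sum>x\<in>UNIV. logit_obj (mu x) (n x)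
      ((\<lambda>x y. ln (mu x y + e) - ln (n x - sum (mu x) UNIV + e)) x))
      \<longlongrightarrow> (\<Sum>x\<in>UNIV. logit_conj (mu x) (n x))) (at_right 0)"
    using n mu mu0 by (intro tendsto_sum tendsto_logit_obj_logit_conj) (auto simp: mu_x0_def)
qed simp

lemma gen_entropy_iid_gumbel:
  fixes P :: "'x::finite \<Rightarrow> ('y::finite option \<Rightarrow> real) measure"
    and Q :: "'y \<Rightarrow> ('x option \<Rightarrow> real) measure"
  assumes n: "\<forall>x. 0 < n x" and m: "\<forall>y. 0 < m y"
    and P: "\<forall>x. P x = iid_gumbel" and Q: "\<forall>y. Q y = iid_gumbel"
    and "feasible_matching mu n m"
  shows "gen_entropy P Q mu n m =
    ereal (- (\<Sum>x\<in>UNIV. (\<Sum>y\<in>UNIV. mu x y * ln (mu x y / n x)) + mu_x0 mu n x * ln (mu_x0 mu n x / n x))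
           - (\<Sum>y\<in>UNIV. (\<Sum>x\<in>UNIV. mu x y * ln (mu x y / m y)) + mu_0y mu m y * ln (mu_0y mu m y / m y)))"
proof -
  from assms(5) have mu: "\<forall>x y. 0 \<le> mu x y" and "\<forall>x. 0 \<le> mu_x0 mu n x" and "\<forall>y. 0 \<le> mu_0y mu m y"
    by (auto simp: feasible_matching_def)
  then have "Gstar P mu n = ereal (\<Sum>x\<in>UNIV. logit_conj (mu x) (n x))"
    and "Hstar Q mu m = ereal (\<Sum>y\<in>UNIV. logit_conj (\<lambda>x. mu x y) (m y))"
    using Gstar_iid_gumbel[OF P n mu] Gstar_iid_gumbel[OF Q m, of "\<lambda>y x. mu x y"]
    by (simp_all add: Hstar_eq_Gstar mu_0y_eq_mu_x0)
  then show ?thesis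
    by (simp add: gen_entropy_def logit_conj_def mu_x0_def mu_0y_def)
qed

section \<open>Duality\<close>

lemma ereal_le_Gstar: "ereal ((\<Sum>x\<in>UNIV. \<Sum>y\<in>UNIV. mu x y * U x y) - G P U n) \<le> Gstar P mu n"
  unfolding Gstar_def by (rule SUP_upper) simp

lemma ereal_le_Hstar: "ereal ((\<Sum>x\<in>UNIV. \<Sum>y\<in>UNIV. mu x y * V x y) - H Q V m) \<le> Hstar Q mu m"
  unfolding Hstar_def by (rule SUP_upper) simp

lemma surplus_split:
  fixes mu :: "'x::finite \<Rightarrow> 'y::finite \<Rightarrow> real"
  shows "(\<Sum>x\<in>UNIV. \<Sum>y\<in>UNIV. mu x y * Phi x y)
     - ((\<Sum>x\<in>UNIV. \<Sum>y\<in>UNIV. mu x y * U x y) - g)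
     - ((\<Sum>x\<in>UNIV. \<Sum>y\<in>UNIV. mu x y * (Phi x y - U x y)) - h) = g + h"
  by (simp add: right_diff_distrib sum_subtractf)

text \<open>Weak duality: splitting the surplus as \<open>Phi = U + (Phi - U)\<close> bounds the welfare of any
  matching by \<open>G + H\<close>, by the Fenchel--Young inequalities for \<open>G\<close> and \<open>H\<close>.\<close>
lemma welfare_obj_le_dual:
  fixes P :: "'x::finite \<Rightarrow> ('y::finite option \<Rightarrow> real) measure"
  shows "welfare_obj P Q Phi mu n m \<le> ereal (G P U n + H Q (\<lambda>x y. Phi x y - U x y) m)"
proof -
  have "ereal a \<le> X \<Longrightarrow> ereal b \<le> Y \<Longrightarrow> s - a - b = t \<Longrightarrow> ereal s + (- X - Y) \<le> ereal t"
    for a b s t X Y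
    by (cases X; cases Y) auto
  from this[OF ereal_le_Gstar ereal_le_Hstar surplus_split] show ?thesis
    by (simp add: welfare_obj_def gen_entropy_def)
qed

lemma Gstar_eq_if_welfare_obj_eq_dual:
  fixes P :: "'x::finite \<Rightarrow> ('y::finite option \<Rightarrow> real) measure"
  assumes "welfare_obj P Q Phi mu n m = ereal (G P U n + H Q (\<lambda>x y. Phi x y - U x y) m)"
  shows "Gstar P mu n = ereal ((\<Sum>x\<in>UNIV. \<Sum>y\<in>UNIV. mu x y * U x y) - G P U n)"
proof -
  have "ereal s + (- X - Y) = ereal t \<Longrightarrow> ereal a \<le> X \<Longrightarrow> ereal b \<le> Y \<Longrightarrow> s - a - b = t
      \<Longrightarrow> X = ereal a" for a b s t X Y
    by (cases X; cases Y) auto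
  from this[OF _ ereal_le_Gstar ereal_le_Hstar surplus_split] assms show ?thesis
    by (simp add: welfare_obj_def gen_entropy_def)
qed

lemma social_welfare_eq_if_welfare_obj_eq_dual:
  fixes P :: "'x::finite \<Rightarrow> ('y::finite option \<Rightarrow> real) measure"
  assumes "welfare_obj P Q Phi mu n m = ereal (G P U n + H Q (\<lambda>x y. Phi x y - U x y) m)"
  shows "social_welfare P Q Phi n m = ereal (G P U n + H Q (\<lambda>x y. Phi x y - U x y) m)"
proof (rule antisym)
  show "social_welfare P Q Phi n m \<le> ereal (G P U n + H Q (\<lambda>x y. Phi x y - U x y) m)"
    unfolding social_welfare_def by (rule SUP_least) (rule welfare_obj_le_dual)
  show "ereal (G P U n + H Q (\<lambda>x y. Phi x y - U x y) m) \<le> social_welfare P Q Phi n m"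
    unfolding social_welfare_def assms[symmetric] by (rule SUP_upper) simp
qed

text \<open>Equality in the Fenchel--Young inequality for \<open>G\<close> makes each \<open>U x\<close> a maximizer of
  \<open>logit_obj (mu x) (n x)\<close>.\<close>
lemma logit_shares_if_welfare_obj_eq_dual:
  fixes P :: "'x::finite \<Rightarrow> ('y::finite option \<Rightarrow> real) measure"
  assumes P: "\<forall>x. P x = iid_gumbel"
    and "welfare_obj P Q Phi mu n m = ereal (G P U n + H Q (\<lambda>x y. Phi x y - U x y) m)"
  shows "mu x y = n x * exp (U x y) / (1 + (\<Sum>y'\<in>UNIV. exp (U x y')))"
proof (rule logit_obj_argmax)
  fix w
  have "ereal (\<Sum>x'\<in>UNIV. logit_obj (mu x') (n x') ((U(x := w)) x')) \<le> Gstar P mu n"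
    using ereal_le_Gstar[of mu "U(x := w)" P n] unfolding G_iid_gumbel[OF P] .
  also have "\<dots> = ereal (\<Sum>x'\<in>UNIV. logit_obj (mu x') (n x') (U x'))"
    using Gstar_eq_if_welfare_obj_eq_dual[OF assms(2)] unfolding G_iid_gumbel[OF P] .
  finally have "(\<Sum>x'\<in>UNIV. logit_obj (mu x') (n x') ((U(x := w)) x'))
      \<le> (\<Sum>x'\<in>UNIV. logit_obj (mu x') (n x') (U x'))"
    by simp
  moreover have "(\<Sum>x'\<in>UNIV. logit_obj (mu x') (n x') ((U(x := w)) x'))
      = logit_obj (mu x) (n x) w + (\<Sum>x'\<in>UNIV - {x}. logit_obj (mu x') (n x') (U x'))"
    by (subst sum.remove[of UNIV x]) (auto intro!: sum.cong)
  moreover have "(\<Sum>x'\<in>UNIV. logit_obj (mu x') (n x') (U x'))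
      = logit_obj (mu x) (n x) (U x) + (\<Sum>x'\<in>UNIV - {x}. logit_obj (mu x') (n x') (U x'))"
    by (subst sum.remove[of UNIV x]) auto
  ultimately show "logit_obj (mu x) (n x) w \<le> logit_obj (mu x) (n x) (U x)"
    by simp
qed

text \<open>Choo--Siow identification: facing these utilities, the logit choices of the men reproduce
  \<open>mu\<close>.\<close>
definition logit_utilities :: "('x::finite \<Rightarrow> 'y::finite \<Rightarrow> real) \<Rightarrow> ('x \<Rightarrow> real) \<Rightarrow> 'x \<Rightarrow> 'y \<Rightarrow> real"
  where "logit_utilities mu n x y = ln (mu x y) - ln (mu_x0 mu n x)"

lemma Gstar_iid_gumbel_logit_utilities:
  fixes P :: "'x::finite \<Rightarrow> ('y::finite option \<Rightarrow> real) measure"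
  assumes P: "\<forall>x. P x = iid_gumbel" and n: "\<forall>x. 0 < n x"
    and mu: "\<forall>x y. 0 < mu x y" and mu0: "\<forall>x. 0 < mu_x0 mu n x"
  shows "Gstar P mu n = ereal ((\<Sum>x\<in>UNIV. \<Sum>y\<in>UNIV. mu x y * logit_utilities mu n x y)
    - G P (logit_utilities mu n) n)"
proof -
  have "logit_obj (mu x) (n x) (logit_utilities mu n x) = logit_conj (mu x) (n x)" for x
    using logit_obj_eq_logit_conj[of "mu x" "n x"] n mu mu0
    by (simp add: logit_utilities_def[abs_def] mu_x0_def)
  then show ?thesis
    using Gstar_iid_gumbel[OF P n] mu mu0 by (simp add: G_iid_gumbel[OF P] less_imp_le)
qed

lemma avg_util_men_iid_gumbel_logit_utilities:
  fixes P :: "'x::finite \<Rightarrow> ('y::finite option \<Rightarrow> real) measure"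
  assumes "P x = iid_gumbel" and "0 < n x" and "\<forall>y. 0 < mu x y" and "0 < mu_x0 mu n x"
  shows "avg_util_men P (logit_utilities mu n) x = ln (n x / mu_x0 mu n x)"
proof -
  have "1 + (\<Sum>y\<in>UNIV. exp (logit_utilities mu n x y)) = n x / mu_x0 mu n x"
    using assms by (simp add: logit_utilities_def exp_diff sum_divide_distrib[symmetric] field_simps)
      (simp add: mu_x0_def)
  then show ?thesis
    using avg_util_men_iid_gumbel[of P x, OF assms(1)] by simp
qed

section \<open>Minimizers of \<open>F\<close> and the equilibrium\<close>

definition logit_matching ::
    "('x \<Rightarrow> 'y \<Rightarrow> real) \<Rightarrow> ('x \<Rightarrow> real) \<Rightarrow> ('y \<Rightarrow> real) \<Rightarrow> ('x \<Rightarrow> real) \<Rightarrow> ('y \<Rightarrow> real) \<Rightarrow> 'x \<Rightarrow> 'y \<Rightarrow> real"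
  where "logit_matching Phi n m u v x y = sqrt (n x * m y) * exp ((Phi x y - u x - v y) / 2)"

lemma logit_matching_transpose:
  "(\<lambda>y x. logit_matching Phi n m u v x y) = logit_matching (\<lambda>y x. Phi x y) m n v u"
  by (simp add: fun_eq_iff logit_matching_def mult.commute algebra_simps)

lemma logit_matching_pos:
  assumes "0 < n x" and "0 < m y"
  shows "0 < logit_matching Phi n m u v x y"
  using assms by (simp add: logit_matching_def)

lemma sqrt_exp: "sqrt (exp a) = exp (a / 2)"
proof -
  have "exp a = (exp (a / 2))\<^sup>2"
    by (simp add: power2_eq_square flip: exp_add)
  then show ?thesis
    by simp
qed

lemma logit_matching_eq_sqrt:
  assumes "0 \<le> n x" and "0 \<le> m y"
  shows "logit_matching Phi n m u v x y
    = sqrt (n x * exp (- u x) * (m y * exp (- v y))) * exp (Phi x y / 2)"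
proof -
  have "sqrt (exp (- u x) * exp (- v y)) * exp (Phi x y / 2) = exp ((Phi x y - u x - v y) / 2)"
    by (simp add: sqrt_exp diff_divide_distrib flip: exp_add)
  then show ?thesis
    using assms by (simp add: logit_matching_def real_sqrt_mult mult_ac)
qed

lemma mu_x0_logit_matching:
  fixes Phi :: "'x::finite \<Rightarrow> 'y::finite \<Rightarrow> real"
  assumes "\<forall>u' v'. Ffun Phi n m u v \<le> Ffun Phi n m u' v'"
  shows "mu_x0 (logit_matching Phi n m u v) n x = n x * exp (- u x)"
  using Ffun_minimizer_eq[OF assms, of x] by (simp add: mu_x0_def logit_matching_def)

lemma mu_0y_logit_matching:
  fixes Phi :: "'x::finite \<Rightarrow> 'y::finite \<Rightarrow> real"
  assumes "\<forall>u' v'. Ffun Phi n m u v \<le> Ffun Phi n m u' v'"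
  shows "mu_0y (logit_matching Phi n m u v) m y = m y * exp (- v y)"
  using mu_x0_logit_matching[OF Ffun_minimizer_swap[THEN iffD1, OF assms], of y]
  unfolding mu_0y_eq_mu_x0 logit_matching_transpose .

text \<open>At a minimizer the mass terms of \<open>F\<close> cancel the coupling terms.\<close>
lemma Ffun_minimizer_value:
  fixes Phi :: "'x::finite \<Rightarrow> 'y::finite \<Rightarrow> real"
  assumes "\<forall>u' v'. Ffun Phi n m u v \<le> Ffun Phi n m u' v'"
  shows "Ffun Phi n m u v = (\<Sum>x\<in>UNIV. n x * u x) + (\<Sum>y\<in>UNIV. m y * v y)"
proof -
  define mu where "mu = logit_matching Phi n m u v"
  have "n x * (u x + exp (- u x) - 1) = n x * u x - (\<Sum>y\<in>UNIV. mu x y)" for x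
    using mu_x0_logit_matching[OF assms, of x] by (simp add: mu_def mu_x0_def algebra_simps)
  moreover have "m y * (v y + exp (- v y) - 1) = m y * v y - (\<Sum>x\<in>UNIV. mu x y)" for y
    using mu_0y_logit_matching[OF assms, of y] by (simp add: mu_def mu_0y_def algebra_simps)
  moreover have "(\<Sum>y\<in>UNIV. \<Sum>x\<in>UNIV. mu x y) = (\<Sum>x\<in>UNIV. \<Sum>y\<in>UNIV. mu x y)"
    by (rule sum.swap)
  ultimately show ?thesis
    unfolding Ffun_def logit_matching_def[symmetric] mu_def[symmetric]
    by (simp add: sum_subtractf)
qed

lemma dual_certificate_Ffun_minimizer:
  fixes P :: "'x::finite \<Rightarrow> ('y::finite option \<Rightarrow> real) measure"
    and Q :: "'y \<Rightarrow> ('x option \<Rightarrow> real) measure"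
  assumes n: "\<forall>x. 0 < n x" and m: "\<forall>y. 0 < m y"
    and P: "\<forall>x. P x = iid_gumbel" and Q: "\<forall>y. Q y = iid_gumbel"
    and min: "\<forall>u' v'. Ffun Phi n m u v \<le> Ffun Phi n m u' v'"
  defines "mu \<equiv> logit_matching Phi n m u v"
  shows "Gstar P mu n = ereal ((\<Sum>x\<in>UNIV. \<Sum>y\<in>UNIV. mu x y * logit_utilities mu n x y)
      - G P (logit_utilities mu n) n)"
    and "Hstar Q mu m = ereal ((\<Sum>x\<in>UNIV. \<Sum>y\<in>UNIV. mu x y * (Phi x y - logit_utilities mu n x y))
      - H Q (\<lambda>x y. Phi x y - logit_utilities mu n x y) m)"
    and "avg_util_men P (logit_utilities mu n) x = u x"
    and "avg_util_women Q (\<lambda>x y. Phi x y - logit_utilities mu n x y) y = v y"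
proof -
  have x0: "mu_x0 mu n x = n x * exp (- u x)" for x
    unfolding mu_def by (rule mu_x0_logit_matching[OF min])
  have y0: "mu_0y mu m y = m y * exp (- v y)" for y
    unfolding mu_def by (rule mu_0y_logit_matching[OF min])
  have mu_pos: "\<forall>x y. 0 < mu x y"
    using n m by (simp add: mu_def logit_matching_pos)
  have x0_pos: "\<forall>x. 0 < mu_x0 mu n x" and y0_pos: "\<forall>y. 0 < mu_0y mu m y"
    using n m by (simp_all add: x0 y0)
  have "mu x y = sqrt (mu_x0 mu n x * mu_0y mu m y) * exp (Phi x y / 2)" for x y
    using n m logit_matching_eq_sqrt[of n x m y Phi u v] by (simp add: less_imp_le flip: mu_def x0 y0)
  then have "ln (mu x y) = ln (mu_x0 mu n x) / 2 + ln (mu_0y mu m y) / 2 + Phi x y / 2" for x y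
    using x0_pos[rule_format, of x] y0_pos[rule_format, of y] by (simp add: ln_mult ln_sqrt)
  then have V: "Phi x y - logit_utilities mu n x y = logit_utilities (\<lambda>y x. mu x y) m y x" for x y
    by (simp add: logit_utilities_def mu_0y_eq_mu_x0)
  show "Gstar P mu n = ereal ((\<Sum>x\<in>UNIV. \<Sum>y\<in>UNIV. mu x y * logit_utilities mu n x y)
      - G P (logit_utilities mu n) n)"
    using P n mu_pos x0_pos by (rule Gstar_iid_gumbel_logit_utilities)
  have "Hstar Q mu m = ereal ((\<Sum>y\<in>UNIV. \<Sum>x\<in>UNIV. mu x y * logit_utilities (\<lambda>y x. mu x y) m y x)
      - G Q (logit_utilities (\<lambda>y x. mu x y) m) m)"
    unfolding Hstar_eq_Gstar
    using Q m mu_pos y0_pos by (intro Gstar_iid_gumbel_logit_utilities) (simp_all add: mu_0y_eq_mu_x0)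
  then show "Hstar Q mu m = ereal ((\<Sum>x\<in>UNIV. \<Sum>y\<in>UNIV. mu x y * (Phi x y - logit_utilities mu n x y))
      - H Q (\<lambda>x y. Phi x y - logit_utilities mu n x y) m)"
    unfolding V H_eq_G by (subst sum.swap) assumption
  show "avg_util_men P (logit_utilities mu n) x = u x"
    using P n mu_pos x0_pos
    by (subst avg_util_men_iid_gumbel_logit_utilities) (simp_all add: x0 ln_div less_imp_neq[symmetric])
  show "avg_util_women Q (\<lambda>x y. Phi x y - logit_utilities mu n x y) y = v y"
    unfolding V avg_util_women_eq_avg_util_men using Q m mu_pos y0_pos
    by (subst avg_util_men_iid_gumbel_logit_utilities) (simp_all add: mu_0y_eq_mu_x0[symmetric] y0 ln_div less_imp_neq[symmetric])
qed

lemma Ffun_minimizer_equilibrium: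
  fixes P :: "'x::finite \<Rightarrow> ('y::finite option \<Rightarrow> real) measure"
    and Q :: "'y \<Rightarrow> ('x option \<Rightarrow> real) measure"
    and n :: "'x \<Rightarrow> real" and m :: "'y \<Rightarrow> real"
    and Phi :: "'x \<Rightarrow> 'y \<Rightarrow> real"
  assumes n: "\<forall>x. 0 < n x" and m: "\<forall>y. 0 < m y"
    and P: "\<forall>x. P x = iid_gumbel" and Q: "\<forall>y. Q y = iid_gumbel"
    and min: "\<forall>u' v'. Ffun Phi n m u v \<le> Ffun Phi n m u' v'"
  shows "let mu = (\<lambda>x y. sqrt (n x * m y) * exp ((Phi x y - u x - v y) / 2)) in
             social_welfare P Q Phi n m = ereal (Ffun Phi n m u v)
           \<and> (\<forall>mu'. is_equilibrium_matching P Q Phi n m mu' \<longleftrightarrow> mu' = mu)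
           \<and> (\<forall>x. mu_x0 mu n x = n x * exp (- u x))
           \<and> (\<forall>y. mu_0y mu m y = m y * exp (- v y))
           \<and> (\<forall>x y. mu x y = sqrt (mu_x0 mu n x * mu_0y mu m y) * exp (Phi x y / 2))
           \<and> (\<forall>x. u x = - ln (mu_x0 mu n x / n x))
           \<and> (\<forall>y. v y = - ln (mu_0y mu m y / m y))
           \<and> (\<exists>U. ereal ((\<Sum>x\<in>UNIV. \<Sum>y\<in>UNIV. mu x y * U x y) - G P U n) = Gstar P mu n
                 \<and> ereal ((\<Sum>x\<in>UNIV. \<Sum>y\<in>UNIV. mu x y * (Phi x y - U x y))
                          - H Q (\<lambda>x y. Phi x y - U x y) m) = Hstar Q mu m
                 \<and> (\<forall>x. u x = avg_util_men P U x)
                 \<and> (\<forall>y. v y = avg_util_women Q (\<lambda>x y. Phi x y - U x y) y))"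
proof -
  define mu where "mu = logit_matching Phi n m u v"
  define U where "U = logit_utilities mu n"
  note cert = dual_certificate_Ffun_minimizer[OF n m P Q min, folded mu_def U_def]
  have x0: "mu_x0 mu n x = n x * exp (- u x)" for x
    unfolding mu_def by (rule mu_x0_logit_matching[OF min])
  have y0: "mu_0y mu m y = m y * exp (- v y)" for y
    unfolding mu_def by (rule mu_0y_logit_matching[OF min])
  have welfare_dual: "welfare_obj P Q Phi mu n m = ereal (G P U n + H Q (\<lambda>x y. Phi x y - U x y) m)"
    using surplus_split[of mu Phi U] by (simp add: welfare_obj_def gen_entropy_def cert(1,2))
  have dual: "G P U n + H Q (\<lambda>x y. Phi x y - U x y) m = Ffun Phi n m u v"
    using Ffun_minimizer_value[OF min] by (simp add: G_def H_def cert(3,4))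
  have SW: "social_welfare P Q Phi n m = ereal (Ffun Phi n m u v)"
    using social_welfare_eq_if_welfare_obj_eq_dual[OF welfare_dual] by (simp only: dual)
  have equilibrium: "is_equilibrium_matching P Q Phi n m mu' \<longleftrightarrow> mu' = mu" for mu'
  proof
    assume "is_equilibrium_matching P Q Phi n m mu'"
    then have "welfare_obj P Q Phi mu' n m = ereal (G P U n + H Q (\<lambda>x y. Phi x y - U x y) m)"
      by (simp add: is_equilibrium_matching_def SW dual)
    from logit_shares_if_welfare_obj_eq_dual[OF P this] logit_shares_if_welfare_obj_eq_dual[OF P welfare_dual]
    show "mu' = mu"
      by (intro ext) simp
  qed (simp add: is_equilibrium_matching_def SW welfare_dual dual)
  have sqrt_singles: "mu x y = sqrt (mu_x0 mu n x * mu_0y mu m y) * exp (Phi x y / 2)" for x y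
    using n m logit_matching_eq_sqrt[of n x m y Phi u v] by (simp add: less_imp_le flip: mu_def x0 y0)
  have u: "u x = - ln (mu_x0 mu n x / n x)" and v: "v y = - ln (mu_0y mu m y / m y)" for x y
    using n m by (simp_all add: x0 y0 less_imp_neq[symmetric])
  have mu_eq: "(\<lambda>x y. sqrt (n x * m y) * exp ((Phi x y - u x - v y) / 2)) = mu"
    by (simp add: mu_def fun_eq_iff logit_matching_def)
  show ?thesis
    unfolding Let_def mu_eq using SW equilibrium x0 y0 sqrt_singles u v cert[symmetric]
    by blast
qed

theorem mainTheorem10:
  fixes P :: "'x::finite \<Rightarrow> ('y::finite option \<Rightarrow> real) measure"
    and Q :: "'y \<Rightarrow> ('x option \<Rightarrow> real) measure"
    and n :: "'x \<Rightarrow> real" and m :: "'y \<Rightarrow> real"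
    and Phi :: "'x \<Rightarrow> 'y \<Rightarrow> real"
  assumes n_pos: "\<forall>x. 0 < n x" and m_pos: "\<forall>y. 0 < m y"
    and P_gumbel: "\<forall>x. P x = iid_gumbel"
    and Q_gumbel: "\<forall>y. Q y = iid_gumbel"
  shows
    "(\<forall>mu. feasible_matching mu n m \<longrightarrow>
        gen_entropy P Q mu n m =
          ereal (- (\<Sum>x\<in>UNIV. (\<Sum>y\<in>UNIV. mu x y * ln (mu x y / n x))
                              + mu_x0 mu n x * ln (mu_x0 mu n x / n x))
                 - (\<Sum>y\<in>UNIV. (\<Sum>x\<in>UNIV. mu x y * ln (mu x y / m y))
                              + mu_0y mu m y * ln (mu_0y mu m y / m y))))
     \<and> (\<forall>u v u' v' t. (u, v) \<noteq> (u', v') \<and> 0 < t \<and> t < 1 \<longrightarrow>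
          Ffun Phi n m (\<lambda>x. t * u x + (1 - t) * u' x) (\<lambda>y. t * v y + (1 - t) * v' y)
            < t * Ffun Phi n m u v + (1 - t) * Ffun Phi n m u' v')
     \<and> (\<exists>u v. \<forall>u' v'. Ffun Phi n m u v \<le> Ffun Phi n m u' v')
     \<and> (\<forall>u v. (\<forall>u' v'. Ffun Phi n m u v \<le> Ffun Phi n m u' v') \<longrightarrow>
          (let mu = (\<lambda>x y. sqrt (n x * m y) * exp ((Phi x y - u x - v y) / 2)) in
             social_welfare P Q Phi n m = ereal (Ffun Phi n m u v)
           \<and> (\<forall>mu'. is_equilibrium_matching P Q Phi n m mu' \<longleftrightarrow> mu' = mu)
           \<and> (\<forall>x. mu_x0 mu n x = n x * exp (- u x))
           \<and> (\<forall>y. mu_0y mu m y = m y * exp (- v y))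
           \<and> (\<forall>x y. mu x y = sqrt (mu_x0 mu n x * mu_0y mu m y) * exp (Phi x y / 2))
           \<and> (\<forall>x. u x = - ln (mu_x0 mu n x / n x))
           \<and> (\<forall>y. v y = - ln (mu_0y mu m y / m y))
           \<and> (\<exists>U. ereal ((\<Sum>x\<in>UNIV. \<Sum>y\<in>UNIV. mu x y * U x y) - G P U n) = Gstar P mu n
                 \<and> ereal ((\<Sum>x\<in>UNIV. \<Sum>y\<in>UNIV. mu x y * (Phi x y - U x y))
                          - H Q (\<lambda>x y. Phi x y - U x y) m) = Hstar Q mu m
                 \<and> (\<forall>x. u x = avg_util_men P U x)
                 \<and> (\<forall>y. v y = avg_util_women Q (\<lambda>x y. Phi x y - U x y) y))))"
  by (intro conjI allI impI; (elim conjE)?)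
    (rule gen_entropy_iid_gumbel[OF n_pos m_pos P_gumbel Q_gumbel]
      Ffun_strictly_convex[OF n_pos m_pos] Ffun_has_minimizer[OF n_pos m_pos]
      Ffun_minimizer_equilibrium[OF n_pos m_pos P_gumbel Q_gumbel]; assumption)+

end
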